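(* Let $(\Xi,\mathcal{F},P)$ be a probability space and $\{y_t\}_{t\in\mathbb{Z}}$ a real, mean-zero, covariance-stationary series on it; put $\mathcal{F}_t=\sigma(y_s,\,s\le t)$. Assume (D1) $P\{y_1^2>0\}=1$; (D2) $y_t=\sum_{s=0}^{\infty}\kappa_s\epsilon_{t-s}$ with $\kappa_0=1$, $\sum_s|\kappa_s|<\infty$, $\kappa(z)=\sum_s\kappa_s z^s\neq 0$ for $|z|\le 1$, where $\{\epsilon_t\}$ is a martingale difference sequence with respect to $\{\mathcal{F}_t\}$; (D3) $E[\epsilon_t^2\mid\mathcal{F}_{t-1}]=\sigma_\epsilon^2$ a.s. (constant); (D4) $\sup_t|\epsilon_t|\le K<\infty$ a.s. Fix $\beta\in[0,1]$, let $\theta_t,\phi_t$ be generated by the recursive algorithm in the context, and assume there are random variables $k^*$ (integer, $0\le k^*<\infty$) and $K^*\in(0,1)$ such that a.s. $|\theta_{t+k^*}|\le K^*$ for all $t\ge1$. Then for each integer $u\ge0$, $$\frac1t\sum_{s=1}^t\phi_s^2=\frac1t\sum_{s=1}^t\Big(\sum_{j=0}^u\kappa_j^\phi(s)\epsilon_{s-j}\Big)^2+r_1(t,u),$$ where almost surely $\lim_{u\to\infty}\limsup_{t\to\infty}|r_1(t,u)|=0$.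
   Context: Recursive algorithm: set $\theta_1=0$, $\bar P_1=0$, $e_1=y_1$, $x_1=y_1$, $\phi_1=x_1$, and for $t\ge2$: $x_t=y_t-\beta\theta_{t-1}x_{t-1}$; $e_t=y_t-\theta_{t-1}e_{t-1}$; $\phi_t=x_t-\theta_{t-1}\phi_{t-1}$; $\bar P_t=\frac1t\sum_{s=1}^{t-1}\phi_s^2$; $\theta_t=\theta_{t-1}+\bar P_t^{-1}\frac1t\phi_{t-1}e_t$. Coefficients: for $t\ge1$, $j\ge0$ (empty products equal 1), $\kappa_j^x(t)=\sum_{l=0}^{\min(j,t-1)}(-\beta)^l\kappa_{j-l}\prod_{i=1}^l\theta_{t-i}$; $\kappa_j^\phi(1)=\kappa_j$ and $\kappa_j^\phi(t)=\kappa_j^x(t)-\theta_{t-1}\kappa_{j-1}^\phi(t-1)$ for $t\ge2$, with $\kappa_{-1}^\phi(\cdot):=0$; these are the coefficients in $\phi_t=\sum_{j\ge0}\kappa_j^\phi(t)\epsilon_{t-j}$. *)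

theory Defs
  imports "HOL-Probability.Probability"
begin

definition nat_filtration :: "'a measure \<Rightarrow> (int \<Rightarrow> 'a \<Rightarrow> real) \<Rightarrow> int \<Rightarrow> 'a measure" where
  "nat_filtration M y t =
     sigma (space M) {y s -` B \<inter> space M | s B. s \<le> t \<and> B \<in> sets borel}"

text \<open>The recursive algorithm. State at time t \<ge> 1 is
  (theta_t, e_t, x_t, phi_t, S_t) with S_t = sum_{s=1}^t phi_s^2,
  so that Pbar_t = S_{t-1} / t. Index 0 is a dummy.\<close>
fun rls :: "real \<Rightarrow> (nat \<Rightarrow> real) \<Rightarrow> nat \<Rightarrow> real \<times> real \<times> real \<times> real \<times> real" where
  "rls \<beta> y 0 = (0, 0, 0, 0, 0)"
| "rls \<beta> y (Suc 0) = (0, y 1, y 1, y 1, (y 1)\<^sup>2)"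
| "rls \<beta> y (Suc (Suc n)) =
    (let t = Suc (Suc n);
         (\<theta>p, ep, xp, \<phi>p, Sp) = rls \<beta> y (Suc n);
         x = y t - \<beta> * \<theta>p * xp;
         e = y t - \<theta>p * ep;
         \<phi> = x - \<theta>p * \<phi>p;
         Pbar = Sp / real t;
         \<theta> = \<theta>p + inverse Pbar * (1 / real t) * \<phi>p * e
     in (\<theta>, e, x, \<phi>, Sp + \<phi>\<^sup>2))"

definition rls_theta :: "real \<Rightarrow> (nat \<Rightarrow> real) \<Rightarrow> nat \<Rightarrow> real" where
  "rls_theta \<beta> y t = (case rls \<beta> y t of (\<theta>, e, x, \<phi>, S) \<Rightarrow> \<theta>)"

definition rls_phi :: "real \<Rightarrow> (nat \<Rightarrow> real) \<Rightarrow> nat \<Rightarrow> real" where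
  "rls_phi \<beta> y t = (case rls \<beta> y t of (\<theta>, e, x, \<phi>, S) \<Rightarrow> \<phi>)"

definition kappa_x :: "real \<Rightarrow> (nat \<Rightarrow> real) \<Rightarrow> (nat \<Rightarrow> real) \<Rightarrow> nat \<Rightarrow> nat \<Rightarrow> real" where
  "kappa_x \<beta> \<kappa> \<theta> t j =
     (\<Sum>l = 0..min j (t - 1). (- \<beta>) ^ l * \<kappa> (j - l) * (\<Prod>i = 1..l. \<theta> (t - i)))"

fun kappa_phi :: "real \<Rightarrow> (nat \<Rightarrow> real) \<Rightarrow> (nat \<Rightarrow> real) \<Rightarrow> nat \<Rightarrow> nat \<Rightarrow> real" where
  "kappa_phi \<beta> \<kappa> \<theta> 0 j = 0"
| "kappa_phi \<beta> \<kappa> \<theta> (Suc 0) j = \<kappa> j"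
| "kappa_phi \<beta> \<kappa> \<theta> (Suc (Suc n)) j =
     kappa_x \<beta> \<kappa> \<theta> (Suc (Suc n)) j
     - \<theta> (Suc n) * (if j = 0 then 0 else kappa_phi \<beta> \<kappa> \<theta> (Suc n) (j - 1))"

end

theory Submission
  imports Defs
begin

text \<open>The claim holds pathwise: only the moving-average representation, the absolute
  summability of \<open>\<kappa>\<close>, (D4) and the eventual bound on \<open>\<theta>\<^sub>t\<close> are used. Both \<open>x\<^sub>t\<close> and \<open>\<phi>\<^sub>t\<close> solve
  first-order recursions with time-varying coefficients \<open>-\<beta>\<theta>\<^sub>t\<^sub>-\<^sub>1\<close> and \<open>-\<theta>\<^sub>t\<^sub>-\<^sub>1\<close>, so
  their moving-average coefficients in the innovations are convolutions of products of these
  coefficients with the coefficients of the input. Once \<open>|\<theta>\<^sub>t| \<le> K\<^sup>* < 1\<close>, these products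
  decay geometrically uniformly in \<open>t\<close>, hence \<open>|\<kappa>\<^sup>\<phi>\<^sub>j(t)| \<le> W\<^sub>j\<close> for a summable \<open>W\<close> that does
  not depend on \<open>t\<close>. As \<open>|\<epsilon>\<^sub>t| \<le> K\<close>, truncating the expansion of \<open>\<phi>\<^sub>s\<close> at lag \<open>u\<close> changes
  \<open>\<phi>\<^sub>s\<^sup>2\<close> by at most a constant times \<open>\<Sum>\<^sub>j\<^sub>>\<^sub>u W\<^sub>j\<close>, uniformly in \<open>s\<close>, so the same bound holds
  for the averages and tends to zero as \<open>u \<rightarrow> \<infinity>\<close>.\<close>

definition rls_x :: "real \<Rightarrow> (nat \<Rightarrow> real) \<Rightarrow> nat \<Rightarrow> real" where
  "rls_x \<beta> y t = (case rls \<beta> y t of (\<theta>, e, x, \<phi>, S) \<Rightarrow> x)"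

lemma rls_x_1 [simp]: "rls_x \<beta> y (Suc 0) = y (Suc 0)"
  and rls_phi_1 [simp]: "rls_phi \<beta> y (Suc 0) = y (Suc 0)"
  by (simp_all add: rls_x_def rls_phi_def)

lemma rls_x_Suc:
  "1 \<le> t \<Longrightarrow> rls_x \<beta> y (Suc t) = y (Suc t) + (- \<beta> * rls_theta \<beta> y t) * rls_x \<beta> y t"
  and rls_phi_Suc:
  "1 \<le> t \<Longrightarrow> rls_phi \<beta> y (Suc t) = rls_x \<beta> y (Suc t) + (- rls_theta \<beta> y t) * rls_phi \<beta> y t"
  by (cases t; cases "rls \<beta> y t" rule: prod_cases5;
      simp add: rls_theta_def rls_x_def rls_phi_def Let_def)+

text \<open>If \<open>g t = (\<Sum>j. G t j * e (t - j))\<close>, then the solution of the time-varying first-order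
  recursion \<open>z 1 = g 1\<close>, \<open>z (t + 1) = g (t + 1) + q t * z t\<close> has the moving-average
  coefficients \<open>ar1_coeff q G t\<close>.\<close>
definition ar1_coeff :: "(nat \<Rightarrow> real) \<Rightarrow> (nat \<Rightarrow> nat \<Rightarrow> real) \<Rightarrow> nat \<Rightarrow> nat \<Rightarrow> real" where
  "ar1_coeff q G t j = (\<Sum>l = 0..min j (t - 1). (\<Prod>i = 1..l. q (t - i)) * G (t - l) (j - l))"

lemma ar1_coeff_1 [simp]: "ar1_coeff q G (Suc 0) j = G (Suc 0) j"
  by (simp add: ar1_coeff_def)

lemma ar1_coeff_Suc:
  assumes "1 \<le> t"
  shows "ar1_coeff q G (Suc t) j = G (Suc t) j + q t * (if j = 0 then 0 else ar1_coeff q G t (j - 1))"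
proof (cases j)
  case 0
  then show ?thesis by (simp add: ar1_coeff_def)
next
  case (Suc j')
  obtain t' where t: "t = Suc t'" using assms by (cases t) auto
  have prod_Suc: "(\<Prod>i = 1..Suc l. q (Suc t - i)) = q t * (\<Prod>i = 1..l. q (t - i))" for l
  proof -
    have "(\<Prod>i = 1..Suc l. q (Suc t - i)) = q t * (\<Prod>i = Suc 1..Suc l. q (Suc t - i))"
      by (subst prod.atLeast_Suc_atMost) auto
    also have "(\<Prod>i = Suc 1..Suc l. q (Suc t - i)) = (\<Prod>i = 1..l. q (t - i))"
      by (subst prod.atLeast_Suc_atMost_Suc_shift) (simp add: comp_def)
    finally show ?thesis .
  qed
  have "ar1_coeff q G (Suc t) j
      = (\<Sum>l = 0..Suc (min j' t'). (\<Prod>i = 1..l. q (Suc t - i)) * G (Suc t - l) (Suc j' - l))"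
    by (simp add: ar1_coeff_def Suc t)
  also have "\<dots> = G (Suc t) j
      + (\<Sum>l = 0..min j' t'. (\<Prod>i = 1..Suc l. q (Suc t - i)) * G (t - l) (j' - l))"
    by (subst sum.atLeast0_atMost_Suc_shift) (simp add: Suc)
  also have "(\<Sum>l = 0..min j' t'. (\<Prod>i = 1..Suc l. q (Suc t - i)) * G (t - l) (j' - l))
      = q t * (\<Sum>l = 0..min j' t'. (\<Prod>i = 1..l. q (t - i)) * G (t - l) (j' - l))"
    by (simp only: prod_Suc sum_distrib_left mult.assoc)
  finally show ?thesis by (simp add: ar1_coeff_def Suc t)
qed

lemma ar1_coeff_sums:
  fixes e :: "int \<Rightarrow> real"
  assumes G: "\<And>t. 1 \<le> t \<Longrightarrow> (\<lambda>j. G t j * e (int t - int j)) sums g t"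
    and z_1: "z 1 = g 1"
    and z_Suc: "\<And>t. 1 \<le> t \<Longrightarrow> z (Suc t) = g (Suc t) + q t * z t"
    and "1 \<le> t"
  shows "(\<lambda>j. ar1_coeff q G t j * e (int t - int j)) sums z t"
  using \<open>1 \<le> t\<close>
proof (induction t rule: nat_induct_at_least)
  case base
  then show ?case using G[of 1] z_1 by (simp add: One_nat_def)
next
  case (Suc t)
  have "(\<lambda>j. (\<lambda>j. if j = 0 then 0 else ar1_coeff q G t (j - 1) * e (int (Suc t) - int j)) (Suc j))
      sums z t"
    using Suc.IH by simp
  then have shifted:
    "(\<lambda>j. if j = 0 then 0 else ar1_coeff q G t (j - 1) * e (int (Suc t) - int j)) sums z t"
    by (subst (asm) sums_Suc_iff) simp
  have "(\<lambda>j. G (Suc t) j * e (int (Suc t) - int j)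
          + q t * (if j = 0 then 0 else ar1_coeff q G t (j - 1) * e (int (Suc t) - int j)))
        sums (g (Suc t) + q t * z t)"
    by (intro sums_add sums_mult G shifted) simp
  moreover have "(\<lambda>j. G (Suc t) j * e (int (Suc t) - int j)
          + q t * (if j = 0 then 0 else ar1_coeff q G t (j - 1) * e (int (Suc t) - int j)))
      = (\<lambda>j. ar1_coeff q G (Suc t) j * e (int (Suc t) - int j))"
    by (rule ext) (simp add: ar1_coeff_Suc[OF Suc.hyps] algebra_simps)
  ultimately show ?case
    by (simp add: z_Suc[OF Suc.hyps])
qed

lemma kappa_x_eq_ar1_coeff: "kappa_x \<beta> \<kappa> \<theta> t j = ar1_coeff (\<lambda>k. - \<beta> * \<theta> k) (\<lambda>_ j. \<kappa> j) t j"
  unfolding kappa_x_def ar1_coeff_def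
proof (intro sum.cong refl)
  fix l
  have "(\<Prod>i = 1..l. - \<beta> * \<theta> (t - i)) = (- \<beta>) ^ l * (\<Prod>i = 1..l. \<theta> (t - i))"
    by (simp only: prod.distrib prod_constant) simp
  then show "(- \<beta>) ^ l * \<kappa> (j - l) * (\<Prod>i = 1..l. \<theta> (t - i))
      = (\<Prod>i = 1..l. - \<beta> * \<theta> (t - i)) * \<kappa> (j - l)"
    by simp
qed

lemma kappa_phi_eq_ar1_coeff:
  "1 \<le> t \<Longrightarrow> kappa_phi \<beta> \<kappa> \<theta> t j = ar1_coeff (\<lambda>k. - \<theta> k) (kappa_x \<beta> \<kappa> \<theta>) t j"
proof (induction t arbitrary: j rule: nat_induct_at_least)
  case base
  then show ?case by (simp add: kappa_x_eq_ar1_coeff One_nat_def)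
next
  case (Suc t)
  then obtain t' where "t = Suc t'" by (cases t) auto
  then show ?case using Suc by (simp add: ar1_coeff_Suc)
qed

lemma kappa_phi_sums_rls_phi:
  fixes e y :: "int \<Rightarrow> real"
  assumes MA: "\<And>t. (\<lambda>s. \<kappa> s * e (t - int s)) sums y t" and "1 \<le> t"
  defines "Y \<equiv> \<lambda>n. y (int n)"
  shows "(\<lambda>j. kappa_phi \<beta> \<kappa> (rls_theta \<beta> Y) t j * e (int t - int j)) sums rls_phi \<beta> Y t"
proof -
  have "(\<lambda>j. kappa_x \<beta> \<kappa> (rls_theta \<beta> Y) t j * e (int t - int j)) sums rls_x \<beta> Y t"
    if "1 \<le> t" for t
    unfolding kappa_x_eq_ar1_coeff
    by (rule ar1_coeff_sums[where g = Y and z = "rls_x \<beta> Y", OF _ _ rls_x_Suc that])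
      (use MA in \<open>simp_all add: Y_def\<close>)
  then show ?thesis
    unfolding kappa_phi_eq_ar1_coeff[OF \<open>1 \<le> t\<close>]
    by (rule ar1_coeff_sums[where z = "rls_phi \<beta> Y", OF _ _ rls_phi_Suc \<open>1 \<le> t\<close>])
      simp_all
qed

lemma prod_eventually_contracting_bound:
  fixes q :: "nat \<Rightarrow> real"
  assumes Ks: "0 < Ks" and q: "\<And>k. kstar < k \<Longrightarrow> \<bar>q k\<bar> \<le> Ks"
  obtains C where "0 \<le> C" "\<And>t l. l \<le> t \<Longrightarrow> \<bar>\<Prod>i = 1..l. q (t - i)\<bar> \<le> C * Ks ^ l"
proof
  \<comment> \<open>At most \<open>kstar + 1\<close> factors have index \<open>\<le> kstar\<close>; each of them is at most \<open>A * Ks\<close>.\<close>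
  define A where "A = max 1 (Max ((\<lambda>k. \<bar>q k\<bar>) ` {..kstar}) / Ks)"
  have A: "1 \<le> A" by (simp add: A_def)
  have factor: "\<bar>q k\<bar> \<le> Ks * (if k \<le> kstar then A else 1)" for k
  proof (cases "k \<le> kstar")
    case True
    then have "\<bar>q k\<bar> / Ks \<le> A"
      unfolding A_def using Ks by (intro max.coboundedI2 divide_right_mono Max_ge) auto
    then show ?thesis using True Ks by (simp add: field_simps)
  qed (use q in auto)
  show "0 \<le> A ^ Suc kstar" using A by simp
  fix t l :: nat
  assume "l \<le> t"
  have "\<bar>\<Prod>i = 1..l. q (t - i)\<bar> \<le> (\<Prod>i = 1..l. Ks * (if t - i \<le> kstar then A else 1))"
    unfolding abs_prod by (intro prod_mono) (use factor in auto)
  also have "\<dots> = Ks ^ l * A ^ card ({1..l} \<inter> {i. t - i \<le> kstar})"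
    by (simp add: prod.distrib prod.If_cases)
  also have "\<dots> \<le> Ks ^ l * A ^ Suc kstar"
  proof (intro mult_left_mono power_increasing A)
    have "card ({1..l} \<inter> {i. t - i \<le> kstar}) \<le> card {t - kstar..t}"
      using \<open>l \<le> t\<close> by (intro card_mono) auto
    then show "card ({1..l} \<inter> {i. t - i \<le> kstar}) \<le> Suc kstar" by simp
  qed (use Ks in simp)
  finally show "\<bar>\<Prod>i = 1..l. q (t - i)\<bar> \<le> A ^ Suc kstar * Ks ^ l"
    by (simp add: mult.commute)
qed

lemma ar1_coeff_summable_bound:
  fixes q g :: "nat \<Rightarrow> real"
  assumes Ks: "0 < Ks" "Ks < 1" and q: "\<And>k. kstar < k \<Longrightarrow> \<bar>q k\<bar> \<le> Ks"
    and G: "\<And>t j. 1 \<le> t \<Longrightarrow> \<bar>G t j\<bar> \<le> g j" and g: "summable g"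
  obtains W where "summable W" "\<And>t j. 1 \<le> t \<Longrightarrow> \<bar>ar1_coeff q G t j\<bar> \<le> W j"
proof -
  obtain C where C: "0 \<le> C" "\<And>t l. l \<le> t \<Longrightarrow> \<bar>\<Prod>i = 1..l. q (t - i)\<bar> \<le> C * Ks ^ l"
    using prod_eventually_contracting_bound[where q = q and kstar = kstar, OF Ks(1) q] by blast
  have g_nonneg: "0 \<le> g j" for j
    using G[of 1 j] by simp
  define W where "W j = C * (\<Sum>l\<le>j. Ks ^ l * g (j - l))" for j
  have "summable (\<lambda>j. \<Sum>l\<le>j. Ks ^ l * g (j - l))"
    by (rule summable_Cauchy_product) (use Ks g g_nonneg in \<open>simp_all add: summable_geometric\<close>)
  then have "summable W"
    unfolding W_def by (rule summable_mult)
  moreover have "\<bar>ar1_coeff q G t j\<bar> \<le> W j" if "1 \<le> t" for t j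
  proof -
    have "\<bar>ar1_coeff q G t j\<bar>
        \<le> (\<Sum>l = 0..min j (t - 1). \<bar>\<Prod>i = 1..l. q (t - i)\<bar> * \<bar>G (t - l) (j - l)\<bar>)"
      unfolding ar1_coeff_def abs_mult[symmetric] by (rule sum_abs)
    also have "\<dots> \<le> (\<Sum>l = 0..min j (t - 1). C * Ks ^ l * g (j - l))"
      using \<open>1 \<le> t\<close> Ks(1) C(1) by (intro sum_mono mult_mono C G) auto
    also have "\<dots> \<le> (\<Sum>l = 0..j. C * Ks ^ l * g (j - l))"
      using C Ks g_nonneg by (intro sum_mono2) auto
    also have "\<dots> = W j"
      by (simp add: W_def atLeast0AtMost sum_distrib_left mult.assoc)
    finally show ?thesis .
  qed
  ultimately show ?thesis
    using that by blast
qed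

lemma kappa_phi_summable_bound:
  assumes "\<bar>\<beta>\<bar> \<le> 1" and Ks: "0 < Ks" "Ks < 1"
    and \<theta>: "\<And>k. kstar < k \<Longrightarrow> \<bar>\<theta> k\<bar> \<le> Ks" and \<kappa>: "summable (\<lambda>s. \<bar>\<kappa> s\<bar>)"
  obtains W where "summable W" "\<And>t j. 1 \<le> t \<Longrightarrow> \<bar>kappa_phi \<beta> \<kappa> \<theta> t j\<bar> \<le> W j"
proof -
  have \<beta>\<theta>: "\<bar>- \<beta> * \<theta> k\<bar> \<le> Ks" if "kstar < k" for k
    using mult_mono[OF \<open>\<bar>\<beta>\<bar> \<le> 1\<close> \<theta>[OF that]] by (simp add: abs_mult)
  obtain Wx where "summable Wx" and kappa_x: "\<And>t j. 1 \<le> t \<Longrightarrow> \<bar>kappa_x \<beta> \<kappa> \<theta> t j\<bar> \<le> Wx j"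
    unfolding kappa_x_eq_ar1_coeff
    by (rule ar1_coeff_summable_bound[where G = "\<lambda>_ j. \<kappa> j", OF Ks \<beta>\<theta> _ \<kappa>]) auto
  have neg_\<theta>: "\<bar>- \<theta> k\<bar> \<le> Ks" if "kstar < k" for k
    using \<theta>[OF that] by simp
  obtain W where "summable W" "\<And>t j. 1 \<le> t \<Longrightarrow> \<bar>ar1_coeff (\<lambda>k. - \<theta> k) (kappa_x \<beta> \<kappa> \<theta>) t j\<bar> \<le> W j"
    by (rule ar1_coeff_summable_bound[OF Ks neg_\<theta> kappa_x \<open>summable Wx\<close>]) auto
  with that show ?thesis
    by (simp add: kappa_phi_eq_ar1_coeff)
qed

lemma limsup_abs_tendsto_0_if_uniformly_bounded:
  fixes r :: "nat \<Rightarrow> nat \<Rightarrow> real"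
  assumes r: "\<And>t u. \<bar>r t u\<bar> \<le> b u" and b: "b \<longlonglongrightarrow> 0"
  shows "(\<lambda>u. limsup (\<lambda>t. ereal \<bar>r t u\<bar>)) \<longlonglongrightarrow> 0"
proof (rule tendsto_sandwich[OF _ _ tendsto_const])
  show "\<forall>\<^sub>F u in sequentially. 0 \<le> limsup (\<lambda>t. ereal \<bar>r t u\<bar>)"
    by (intro always_eventually allI le_Limsup) auto
  show "\<forall>\<^sub>F u in sequentially. limsup (\<lambda>t. ereal \<bar>r t u\<bar>) \<le> ereal (b u)"
    by (intro always_eventually allI Limsup_bounded) (use r in auto)
  show "(\<lambda>u. ereal (b u)) \<longlonglongrightarrow> 0"
    using b by (simp add: zero_ereal_def)
qed

lemma mean_diff_abs_le:
  fixes a b :: "nat \<Rightarrow> real"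
  assumes "\<And>s. s \<in> {1..t} \<Longrightarrow> \<bar>a s - b s\<bar> \<le> d" and "0 \<le> d"
  shows "\<bar>1 / real t * (\<Sum>s = 1..t. a s) - 1 / real t * (\<Sum>s = 1..t. b s)\<bar> \<le> d"
proof (cases "t = 0")
  case False
  have "\<bar>1 / real t * (\<Sum>s = 1..t. a s) - 1 / real t * (\<Sum>s = 1..t. b s)\<bar>
      = 1 / real t * \<bar>\<Sum>s = 1..t. a s - b s\<bar>"
    unfolding sum_subtractf right_diff_distrib[symmetric] abs_mult by simp
  also have "\<dots> \<le> 1 / real t * (\<Sum>s = 1..t. d)"
    by (intro mult_left_mono order_trans[OF sum_abs] sum_mono assms) auto
  also have "\<dots> = d"
    using False by simp
  finally show ?thesis .
qed (use assms in simp)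

lemma mean_squares_truncation_error_tendsto_0:
  fixes c :: "nat \<Rightarrow> nat \<Rightarrow> real" and e :: "int \<Rightarrow> real"
  assumes rep: "\<And>s. 1 \<le> s \<Longrightarrow> (\<lambda>j. c s j * e (int s - int j)) sums \<phi> s"
    and c: "\<And>s j. 1 \<le> s \<Longrightarrow> \<bar>c s j\<bar> \<le> W j" and W: "summable W"
    and e: "\<And>t. \<bar>e t\<bar> \<le> K"
  shows "(\<lambda>u. limsup (\<lambda>t. ereal \<bar>1 / real t * (\<Sum>s = 1..t. (\<phi> s)\<^sup>2)
            - 1 / real t * (\<Sum>s = 1..t. (\<Sum>j = 0..u. c s j * e (int s - int j))\<^sup>2)\<bar>))
         \<longlonglongrightarrow> 0"
proof -
  define tr where "tr s u = (\<Sum>j = 0..u. c s j * e (int s - int j))" for s u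
  define B where "B = K * suminf W"
  define \<tau> where "\<tau> u = K * (\<Sum>j. W (j + Suc u))" for u
  have K: "0 \<le> K"
    using e[of 0] by linarith
  have W_nonneg: "0 \<le> W j" for j
    using c[of 1 j] by simp
  have \<tau>_nonneg: "0 \<le> \<tau> u" for u
    unfolding \<tau>_def using K W_nonneg
    by (intro mult_nonneg_nonneg suminf_nonneg summable_ignore_initial_segment W) auto
  have summand: "\<bar>c s j * e (int s - int j)\<bar> \<le> K * W j" if "1 \<le> s" for s j
    unfolding abs_mult using c[OF that] e K by (subst mult.commute) (intro mult_mono, auto)
  have phi: "\<bar>\<phi> s\<bar> \<le> B" if "1 \<le> s" for s
    unfolding B_def real_norm_def[symmetric]
    by (rule norm_sums_le[OF rep[OF that] sums_mult[OF summable_sums[OF W]]]) (use summand[OF that] in simp)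
  have trunc: "\<bar>tr s u\<bar> \<le> B" if "1 \<le> s" for s u
  proof -
    have "\<bar>tr s u\<bar> \<le> (\<Sum>j = 0..u. K * W j)"
      unfolding tr_def by (intro order_trans[OF sum_abs] sum_mono summand[OF that])
    also have "\<dots> \<le> (\<Sum>j. K * W j)"
      using K W_nonneg by (intro sum_le_suminf summable_mult W) auto
    finally show ?thesis
      by (simp add: B_def suminf_mult[OF W])
  qed
  have tail: "\<bar>\<phi> s - tr s u\<bar> \<le> \<tau> u" if "1 \<le> s" for s u
  proof -
    have "(\<lambda>j. c s (j + Suc u) * e (int s - int (j + Suc u))) sums (\<phi> s - tr s u)"
      using sums_split_initial_segment[OF rep[OF that], of "Suc u"]
      by (simp add: tr_def atLeast0AtMost lessThan_Suc_atMost)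
    moreover have "(\<lambda>j. K * W (j + Suc u)) sums \<tau> u"
      unfolding \<tau>_def by (intro sums_mult summable_sums summable_ignore_initial_segment W)
    ultimately show ?thesis
      unfolding real_norm_def[symmetric] by (rule norm_sums_le) (metis summand[OF that] real_norm_def)
  qed
  have "\<bar>(\<phi> s)\<^sup>2 - (tr s u)\<^sup>2\<bar> \<le> 2 * B * \<tau> u" if "1 \<le> s" for s u
  proof -
    have "\<bar>(\<phi> s)\<^sup>2 - (tr s u)\<^sup>2\<bar> = \<bar>\<phi> s - tr s u\<bar> * \<bar>\<phi> s + tr s u\<bar>"
      by (simp add: power2_eq_square algebra_simps flip: abs_mult)
    also have "\<dots> \<le> \<tau> u * (2 * B)"
      using tail[OF that, of u] phi[OF that] trunc[OF that, of u] \<tau>_nonneg[of u]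
      by (intro mult_mono) auto
    finally show ?thesis
      by (simp add: mult_ac)
  qed
  moreover have "0 \<le> B"
    using phi[of 1] by simp
  moreover have "\<tau> \<longlonglongrightarrow> 0"
    unfolding \<tau>_def
    using tendsto_mult_left[OF LIMSEQ_Suc[OF suminf_exist_split2[OF W]], of K] by simp
  ultimately show ?thesis
    unfolding tr_def[symmetric]
    by (intro limsup_abs_tendsto_0_if_uniformly_bounded[where b = "\<lambda>u. 2 * B * \<tau> u"]
        mean_diff_abs_le tendsto_mult_right_zero) (auto intro!: mult_nonneg_nonneg \<tau>_nonneg)
qed

theorem lemma4p2:
  fixes M :: "'a measure"
    and y \<epsilon> :: "int \<Rightarrow> 'a \<Rightarrow> real"
    and \<kappa> :: "nat \<Rightarrow> real"
    and \<sigma>2 K \<beta> :: real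
  assumes prob: "prob_space M"
    \<comment> \<open>mean-zero covariance-stationary real series\<close>
    and y_meas: "\<And>t. y t \<in> borel_measurable M"
    and y_sq_int: "\<And>t. integrable M (\<lambda>\<omega>. (y t \<omega>)\<^sup>2)"
    and y_mean: "\<And>t. (\<integral>\<omega>. y t \<omega> \<partial>M) = 0"
    and y_cov: "\<And>t h. (\<integral>\<omega>. y (t + h) \<omega> * y t \<omega> \<partial>M) = (\<integral>\<omega>. y h \<omega> * y 0 \<omega> \<partial>M)"
    \<comment> \<open>(D1)\<close>
    and D1: "AE \<omega> in M. (y 1 \<omega>)\<^sup>2 > 0"
    \<comment> \<open>(D2)\<close>
    and kappa0: "\<kappa> 0 = 1"
    and kappa_abs: "summable (\<lambda>s. \<bar>\<kappa> s\<bar>)"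
    and kappa_nz: "\<And>z::complex. norm z \<le> 1 \<Longrightarrow> (\<Sum>s. complex_of_real (\<kappa> s) * z ^ s) \<noteq> 0"
    and y_MA: "AE \<omega> in M. \<forall>t. (\<lambda>s. \<kappa> s * \<epsilon> (t - int s) \<omega>) sums y t \<omega>"
    and eps_adapted: "\<And>t. \<epsilon> t \<in> borel_measurable (nat_filtration M y t)"
    and eps_int: "\<And>t. integrable M (\<epsilon> t)"
    and eps_mds: "\<And>t. AE \<omega> in M. real_cond_exp M (nat_filtration M y (t - 1)) (\<epsilon> t) \<omega> = 0"
    \<comment> \<open>(D3)\<close>
    and D3: "\<And>t. AE \<omega> in M.
               real_cond_exp M (nat_filtration M y (t - 1)) (\<lambda>\<omega>'. (\<epsilon> t \<omega>')\<^sup>2) \<omega> = \<sigma>2"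
    \<comment> \<open>(D4)\<close>
    and D4: "AE \<omega> in M. \<forall>t. \<bar>\<epsilon> t \<omega>\<bar> \<le> K"
    and beta: "0 \<le> \<beta>" "\<beta> \<le> 1"
    \<comment> \<open>eventual boundedness of theta_t strictly inside (-1,1)\<close>
    and theta_bd: "AE \<omega> in M. \<exists>(kstar::nat) (Kstar::real). 0 < Kstar \<and> Kstar < 1 \<and>
               (\<forall>t\<ge>1. \<bar>rls_theta \<beta> (\<lambda>n. y (int n) \<omega>) (t + kstar)\<bar> \<le> Kstar)"
  shows "AE \<omega> in M.
    (let \<theta> = rls_theta \<beta> (\<lambda>n. y (int n) \<omega>);
         \<phi> = rls_phi \<beta> (\<lambda>n. y (int n) \<omega>);
         r1 = (\<lambda>t u. (1 / real t) * (\<Sum>s = 1..t. (\<phi> s)\<^sup>2)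
                 - (1 / real t) * (\<Sum>s = 1..t.
                      (\<Sum>j = 0..u. kappa_phi \<beta> \<kappa> \<theta> s j * \<epsilon> (int s - int j) \<omega>)\<^sup>2))
     in (\<lambda>u. limsup (\<lambda>t. ereal \<bar>r1 t u\<bar>)) \<longlonglongrightarrow> 0)"
  using y_MA D4 theta_bd
proof eventually_elim
  case (elim \<omega>)
  define \<theta> where "\<theta> = rls_theta \<beta> (\<lambda>n. y (int n) \<omega>)"
  from elim obtain kstar Kstar where Kstar: "0 < Kstar" "Kstar < 1"
    and \<theta>_shifted: "\<forall>t\<ge>1. \<bar>\<theta> (t + kstar)\<bar> \<le> Kstar"
    unfolding \<theta>_def by blast
  have \<theta>_bound: "\<bar>\<theta> k\<bar> \<le> Kstar" if "kstar < k" for k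
    using \<theta>_shifted[rule_format, of "k - kstar"] that by simp
  obtain W where "summable W" "\<And>t j. 1 \<le> t \<Longrightarrow> \<bar>kappa_phi \<beta> \<kappa> \<theta> t j\<bar> \<le> W j"
    by (rule kappa_phi_summable_bound[OF _ Kstar \<theta>_bound kappa_abs]) (use beta in auto)
  moreover have "(\<lambda>j. kappa_phi \<beta> \<kappa> \<theta> s j * \<epsilon> (int s - int j) \<omega>) sums rls_phi \<beta> (\<lambda>n. y (int n) \<omega>) s"
    if "1 \<le> s" for s
    unfolding \<theta>_def using elim by (intro kappa_phi_sums_rls_phi that) blast
  ultimately show ?case
    unfolding Let_def \<theta>_def[symmetric] using elim
    by (intro mean_squares_truncation_error_tendsto_0) blast+
qed

end
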